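(* Let $d\geq 2$, $a\in[1/2,1]$, $\kappa\in[1/4,3/4]$ and $\delta>0$. Define for $k\in\mathbb{N}$ the points $x^{k,\delta}\in\mathbb{R}^{d}$ by $x^{k,\delta}=(a(k+1-\kappa)^{-1},0,\dots,0)$ if $k$ is odd and $x^{k,\delta}=(a(k+1-\kappa)^{-1},\delta,0,\dots,0)$ if $k$ is even, and let $f_a:\mathbb{R}^{d}\to\{0,1\}$ be $f_a(x)=1$ if $\lceil a/x_1\rceil$ is an odd integer and $f_a(x)=0$ otherwise. Fix neural network dimensions $\mathbf{N}=(N_L=1,N_{L-1},\dots,N_1,N_0=d)$ with $L\geq 2$. Then there exists $\tilde\varphi\in\mathcal{NN}_{\mathbf{N},L}$ with $\tilde\varphi(x^{k,\delta})=f_a(x^{k,\delta})$ for all $k\in\mathbb{N}$.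
   Context: $\mathcal{NN}_{\mathbf{N},L}$ is the set of maps $\varphi=W^L\rho W^{L-1}\rho\cdots\rho W^1:\mathbb{R}^d\to\mathbb{R}$ where each $W^\ell:\mathbb{R}^{N_{\ell-1}}\to\mathbb{R}^{N_\ell}$ is affine and $\rho(t)=\max\{0,t\}$ is applied coordinatewise. *)

theory Defs
  imports Complex_Main
begin

text \<open>Vectors in R^n are represented as functions nat => real; only the
coordinates 0..n-1 are meaningful (coordinate i here is x_(i+1) in the paper).\<close>

definition relu :: "real \<Rightarrow> real" where
  "relu t = max 0 t"

definition affine_map :: "(nat \<Rightarrow> nat \<Rightarrow> real) \<Rightarrow> (nat \<Rightarrow> real) \<Rightarrow> nat \<Rightarrow> nat
    \<Rightarrow> (nat \<Rightarrow> real) \<Rightarrow> (nat \<Rightarrow> real)" where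
  "affine_map A b n m x = (\<lambda>i. if i < m then (\<Sum>j<n. A i j * x j) + b i else 0)"

fun nn_layers :: "nat list \<Rightarrow> nat \<Rightarrow> (nat \<Rightarrow> nat \<Rightarrow> nat \<Rightarrow> real) \<Rightarrow> (nat \<Rightarrow> nat \<Rightarrow> real)
    \<Rightarrow> nat \<Rightarrow> (nat \<Rightarrow> real) \<Rightarrow> (nat \<Rightarrow> real)" where
  "nn_layers Ns L W B 0 x = (\<lambda>i. if i < Ns ! 0 then x i else 0)"
| "nn_layers Ns L W B (Suc l) x =
     (let y = affine_map (W (Suc l)) (B (Suc l)) (Ns ! l) (Ns ! Suc l) (nn_layers Ns L W B l x)
      in if Suc l = L then y else (\<lambda>i. relu (y i)))"

text \<open>The class NN_{N,L} of ReLU networks R^d -> R with widths N = (N_0,...,N_L),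
N_0 = d, N_L = 1 (given as a list of length L+1).\<close>
definition NN :: "nat list \<Rightarrow> nat \<Rightarrow> ((nat \<Rightarrow> real) \<Rightarrow> real) set" where
  "NN Ns L = {\<phi>. \<exists>W B. \<forall>x. \<phi> x = nn_layers Ns L W B L x 0}"

definition f_a :: "real \<Rightarrow> (nat \<Rightarrow> real) \<Rightarrow> real" where
  "f_a a x = (if odd \<lceil>a / x 0\<rceil> then 1 else 0)"

definition xpt :: "real \<Rightarrow> real \<Rightarrow> real \<Rightarrow> nat \<Rightarrow> (nat \<Rightarrow> real)" where
  "xpt a \<kappa> \<delta> k = (\<lambda>i. if i = 0 then a / (real k + 1 - \<kappa>)
                          else if i = 1 \<and> even k then \<delta> else 0)"

end

theory Submission
  imports Defs
begin

(* On the points x^{k,delta} the first coordinate encodes the parity of k, since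
   ceiling (a / x_1) = ceiling (k + 1 - kappa) = k + 1; but the second coordinate encodes it
   too, being delta for even k and 0 for odd k. So f_a agrees on these points with
   x |-> x_2 / delta, which is nonnegative there and hence passes unchanged through every
   ReLU: a network of any architecture that reads x_2 / delta into one neuron of the first
   layer and copies that neuron through all later layers does the job. *)

lemma f_a_xpt:
  assumes "a \<noteq> 0" and "0 \<le> \<kappa>" and "\<kappa> < 1"
  shows "f_a a (xpt a \<kappa> \<delta> k) = (if even k then 1 else 0)"
proof -
  have "real k + 1 - \<kappa> > 0" using assms(3) by simp
  then have "a / xpt a \<kappa> \<delta> k 0 = real k + 1 - \<kappa>"
    using assms(1) by (simp add: xpt_def)
  moreover have "\<lceil>real k + 1 - \<kappa>\<rceil> = int k + 1"
    using assms(2,3) by (simp add: ceiling_eq_iff)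
  ultimately show ?thesis by (simp add: f_a_def)
qed

lemma nn_layers_Suc_nonneg:
  assumes "0 \<le> affine_map (W (Suc l)) (B (Suc l)) (Ns ! l) (Ns ! Suc l) (nn_layers Ns L W B l x) i"
  shows "nn_layers Ns L W B (Suc l) x i
    = affine_map (W (Suc l)) (B (Suc l)) (Ns ! l) (Ns ! Suc l) (nn_layers Ns L W B l x) i"
  using assms by (simp add: Let_def relu_def)

definition coordinate_net_weights :: "real \<Rightarrow> nat \<Rightarrow> nat \<Rightarrow> nat \<Rightarrow> nat \<Rightarrow> real" where
  "coordinate_net_weights c j l i i' =
     (if l = 1 then (if i = 0 \<and> i' = j then c else 0) else (if i = 0 \<and> i' = 0 then 1 else 0))"

lemma nn_layers_coordinate_net:
  assumes "0 < l" and "j < Ns ! 0" and "\<And>l'. l' \<le> l \<Longrightarrow> 0 < Ns ! l'"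
    and "0 \<le> c * x j"
  shows "nn_layers Ns L (coordinate_net_weights c j) (\<lambda>_ _. 0) l x 0 = c * x j"
  using assms
proof (induction l)
  case 0
  then show ?case by simp
next
  case (Suc l)
  let ?W = "coordinate_net_weights c j" and ?B = "\<lambda>_ _. 0 :: real"
  have previous: "nn_layers Ns L ?W ?B l x 0 = c * x j" if "l \<noteq> 0"
    using Suc that by simp
  have "affine_map (?W (Suc l)) (?B (Suc l)) (Ns ! l) (Ns ! Suc l) (nn_layers Ns L ?W ?B l x) 0
      = c * x j"
    using previous Suc.prems by (cases "l = 0")
      (simp_all add: affine_map_def coordinate_net_weights_def if_distrib[of "\<lambda>t. t * _"]
        sum.delta cong: if_cong)
  then show ?case using Suc.prems(4) nn_layers_Suc_nonneg by metis
qed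

lemma scaled_coordinate_in_NN:
  assumes "0 < L" and "j < Ns ! 0" and "\<forall>l \<le> L. 0 < Ns ! l"
  shows "\<exists>\<phi> \<in> NN Ns L. \<forall>x. 0 \<le> c * x j \<longrightarrow> \<phi> x = c * x j"
proof
  let ?\<phi> = "\<lambda>x. nn_layers Ns L (coordinate_net_weights c j) (\<lambda>_ _. 0) L x 0"
  show "?\<phi> \<in> NN Ns L" unfolding NN_def by blast
  show "\<forall>x. 0 \<le> c * x j \<longrightarrow> ?\<phi> x = c * x j"
    using assms nn_layers_coordinate_net[of L j Ns c] by simp
qed

theorem lemma5p3:
  fixes d L :: nat and Ns :: "nat list" and a \<kappa> \<delta> :: real
  assumes "d \<ge> 2"
    and "1/2 \<le> a" and "a \<le> 1"
    and "1/4 \<le> \<kappa>" and "\<kappa> \<le> 3/4"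
    and "\<delta> > 0"
    and "L \<ge> 2"
    and "length Ns = L + 1" and "Ns ! 0 = d" and "Ns ! L = 1"
    and "\<forall>l \<le> L. Ns ! l \<ge> 1"
  shows "\<exists>\<phi> \<in> NN Ns L. \<forall>k::nat. \<phi> (xpt a \<kappa> \<delta> k) = f_a a (xpt a \<kappa> \<delta> k)"
proof -
  obtain \<phi> where "\<phi> \<in> NN Ns L" and \<phi>: "\<And>x. 0 \<le> 1 / \<delta> * x 1 \<Longrightarrow> \<phi> x = 1 / \<delta> * x 1"
    using scaled_coordinate_in_NN[of L 1 Ns "1 / \<delta>"] assms(1,7,9,11) by force
  moreover have "\<phi> (xpt a \<kappa> \<delta> k) = f_a a (xpt a \<kappa> \<delta> k)" for k
  proof -
    have "xpt a \<kappa> \<delta> k 1 = (if even k then \<delta> else 0)" by (simp add: xpt_def)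
    then show ?thesis using \<phi>[of "xpt a \<kappa> \<delta> k"] f_a_xpt[of a \<kappa>] assms(2,4,5,6) by simp
  qed
  ultimately show ?thesis by blast
qed

end
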